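(* Let $\epsilon>0$, let $f(\cdot)$ be any function, and let $\mathcal{I}$ be a bin packing input made up solely of large items (items of size at least $\epsilon$). Then any packing of $\mathcal{I}$ into unit bins using at most $(1+\epsilon)\cdot OPT(\mathcal{I})+f(\epsilon^{-1})$ bins has all but at most $2\epsilon\cdot OPT(\mathcal{I})+2f(\epsilon^{-1})+3$ of its bins either containing no large items or being more than half filled by large items (i.e., the total size of large items in the bin exceeds $1/2$).
   Context: $OPT(\mathcal{I})$ denotes the minimum number of unit-capacity bins into which the items of $\mathcal{I}$ can be packed. *)

theory Defs
  imports Main "HOL.Real"
begin

definition bp_input :: "real list \<Rightarrow> bool" where
  "bp_input xs \<longleftrightarrow> (\<forall>x\<in>set xs. 0 < x \<and> x \<le> 1)"

definition bin_load :: "real list \<Rightarrow> (nat \<Rightarrow> nat) \<Rightarrow> nat \<Rightarrow> real" where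
  "bin_load xs b j = (\<Sum>i\<in>{i. i < length xs \<and> b i = j}. xs ! i)"

definition is_packing :: "real list \<Rightarrow> nat \<Rightarrow> (nat \<Rightarrow> nat) \<Rightarrow> bool" where
  "is_packing xs m b \<longleftrightarrow> (\<forall>i<length xs. b i < m) \<and> (\<forall>j<m. bin_load xs b j \<le> 1)"

definition OPT :: "real list \<Rightarrow> nat" where
  "OPT xs = (LEAST m. \<exists>b. is_packing xs m b)"

definition large_load :: "real \<Rightarrow> real list \<Rightarrow> (nat \<Rightarrow> nat) \<Rightarrow> nat \<Rightarrow> real" where
  "large_load eps xs b j = (\<Sum>i\<in>{i. i < length xs \<and> b i = j \<and> eps \<le> xs ! i}. xs ! i)"

definition has_large_item :: "real \<Rightarrow> real list \<Rightarrow> (nat \<Rightarrow> nat) \<Rightarrow> nat \<Rightarrow> bool" where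
  "has_large_item eps xs b j \<longleftrightarrow> (\<exists>i<length xs. b i = j \<and> eps \<le> xs ! i)"

end

theory Submission
  imports Defs
begin

text \<open>Two bins of load at most 1/2 can be merged into one. Hence if k of the used bins of a
  packing are at most half full, merging them in pairs gives a packing with
  \<lfloor>k/2\<rfloor> fewer bins, so \<lfloor>k/2\<rfloor> \<le> m - OPT \<le> eps OPT + f(1/eps).
  When all items are large, the bins of the theorem that contain a large item but are at
  most half filled by large items are exactly such bins.\<close>

definition used_bins :: "real list \<Rightarrow> (nat \<Rightarrow> nat) \<Rightarrow> nat set" where
  "used_bins xs b = b ` {..<length xs}"

definition merge_bins :: "(nat \<Rightarrow> nat) \<Rightarrow> nat \<Rightarrow> nat \<Rightarrow> nat \<Rightarrow> nat" where
  "merge_bins b j2 j1 = (\<lambda>i. if b i = j2 then j1 else b i)"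

lemma finite_used_bins [simp]: "finite (used_bins xs b)"
  unfolding used_bins_def by simp

lemma used_bins_subset: "is_packing xs m b \<Longrightarrow> used_bins xs b \<subseteq> {..<m}"
  unfolding used_bins_def is_packing_def by auto

lemma bin_load_comp_inj_on:
  assumes "inj_on g (used_bins xs b)" and "j \<in> used_bins xs b"
  shows "bin_load xs (g \<circ> b) (g j) = bin_load xs b j"
proof -
  have "{i. i < length xs \<and> g (b i) = g j} = {i. i < length xs \<and> b i = j}"
    using assms unfolding used_bins_def by (auto dest: inj_onD)
  then show ?thesis unfolding bin_load_def by simp
qed

lemma OPT_le_card_used_bins:
  assumes "is_packing xs m b"
  shows "OPT xs \<le> card (used_bins xs b)"
proof -
  let ?U = "used_bins xs b"
  obtain g where g: "bij_betw g ?U {0..<card ?U}"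
    using ex_bij_betw_finite_nat finite_used_bins by blast
  have "is_packing xs (card ?U) (g \<circ> b)"
    unfolding is_packing_def
  proof (intro conjI allI impI)
    fix i assume "i < length xs"
    then have "b i \<in> ?U" unfolding used_bins_def by simp
    then show "(g \<circ> b) i < card ?U" using g by (auto simp: bij_betw_def)
  next
    fix j assume "j < card ?U"
    then obtain u where u: "u \<in> ?U" "j = g u"
      using g by (metis atLeastLessThan_iff bij_betw_imp_surj_on imageE zero_le)
    have "bin_load xs (g \<circ> b) j = bin_load xs b u"
      using u g bin_load_comp_inj_on by (auto simp: bij_betw_def)
    also have "\<dots> \<le> 1"
      using assms u(1) used_bins_subset unfolding is_packing_def by blast
    finally show "bin_load xs (g \<circ> b) j \<le> 1" .
  qed
  then show ?thesis unfolding OPT_def by (metis Least_le)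
qed

lemma bin_load_merge_bins_target:
  assumes "j1 \<noteq> j2"
  shows "bin_load xs (merge_bins b j2 j1) j1 = bin_load xs b j1 + bin_load xs b j2"
proof -
  have bins: "{i. i < length xs \<and> merge_bins b j2 j1 i = j1}
        = {i. i < length xs \<and> b i = j1} \<union> {i. i < length xs \<and> b i = j2}"
    using assms unfolding merge_bins_def by auto
  show ?thesis
    unfolding bin_load_def bins by (rule sum.union_disjoint) (use assms in auto)
qed

lemma bin_load_merge_bins_other:
  "j \<noteq> j1 \<Longrightarrow> j \<noteq> j2 \<Longrightarrow> bin_load xs (merge_bins b j2 j1) j = bin_load xs b j"
  unfolding bin_load_def merge_bins_def by (rule arg_cong[where f = "sum _"]) auto

lemma bin_load_merge_bins_source:
  "j1 \<noteq> j2 \<Longrightarrow> bin_load xs (merge_bins b j2 j1) j2 = 0"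
  unfolding bin_load_def merge_bins_def by simp

lemma is_packing_merge_bins:
  assumes "is_packing xs m b" and "j1 < m" and "j1 \<noteq> j2"
    and "bin_load xs b j1 + bin_load xs b j2 \<le> 1"
  shows "is_packing xs m (merge_bins b j2 j1)"
  unfolding is_packing_def
proof (intro conjI allI impI)
  fix i assume "i < length xs"
  then show "merge_bins b j2 j1 i < m"
    using assms(1,2) unfolding is_packing_def merge_bins_def by auto
next
  fix j assume "j < m"
  then show "bin_load xs (merge_bins b j2 j1) j \<le> 1"
    using assms bin_load_merge_bins_target bin_load_merge_bins_other bin_load_merge_bins_source
    unfolding is_packing_def by (cases "j = j1 \<or> j = j2") auto
qed

lemma used_bins_merge_bins:
  assumes "j1 \<in> used_bins xs b" and "j1 \<noteq> j2"
  shows "used_bins xs (merge_bins b j2 j1) = used_bins xs b - {j2}"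
proof
  show "used_bins xs (merge_bins b j2 j1) \<subseteq> used_bins xs b - {j2}"
    using assms unfolding used_bins_def merge_bins_def by auto
  show "used_bins xs b - {j2} \<subseteq> used_bins xs (merge_bins b j2 j1)"
    unfolding used_bins_def merge_bins_def by (auto simp: image_iff)
qed

lemma OPT_plus_half_empty_bins_le:
  assumes "is_packing xs m b" and "S \<subseteq> used_bins xs b" and "\<forall>j\<in>S. bin_load xs b j \<le> 1/2"
  shows "OPT xs + card S div 2 \<le> card (used_bins xs b)"
  using assms
proof (induction "card S" arbitrary: S b rule: less_induct)
  case less
  show ?case
  proof (cases "card S \<le> 1")
    case True
    then show ?thesis using OPT_le_card_used_bins[OF less.prems(1)] by simp
  next
    case False
    have "finite S" using finite_subset[OF less.prems(2)] by simp
    then have "\<not> (\<forall>j1\<in>S. \<forall>j2\<in>S. j1 = j2)"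
      using False card_le_Suc0_iff_eq by (metis One_nat_def)
    then obtain j1 j2 where j: "j1 \<in> S" "j2 \<in> S" "j1 \<noteq> j2"
      by blast
    let ?b' = "merge_bins b j2 j1"
    let ?S' = "S - {j1, j2}"
    have j1U: "j1 \<in> used_bins xs b" and j2U: "j2 \<in> used_bins xs b"
      using j less.prems(2) by auto
    have used': "used_bins xs ?b' = used_bins xs b - {j2}"
      using used_bins_merge_bins[OF j1U j(3)] .
    have "j1 < m" using j1U used_bins_subset[OF less.prems(1)] by auto
    moreover have "bin_load xs b j1 \<le> 1/2" "bin_load xs b j2 \<le> 1/2"
      using less.prems(3) j by auto
    ultimately have packing': "is_packing xs m ?b'"
      using is_packing_merge_bins[OF less.prems(1) _ j(3)] by simp
    have S'_used: "?S' \<subseteq> used_bins xs ?b'"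
      using less.prems(2) used' by auto
    have S'_half: "\<forall>j\<in>?S'. bin_load xs ?b' j \<le> 1/2"
      using less.prems(3) bin_load_merge_bins_other by simp
    have card_S': "card ?S' = card S - 2"
      using \<open>finite S\<close> j by (simp add: card_Diff_subset)
    then have "OPT xs + card ?S' div 2 \<le> card (used_bins xs ?b')"
      using less.hyps[OF _ packing' S'_used S'_half] False by simp
    moreover have "card (used_bins xs ?b') = card (used_bins xs b) - 1"
      using used' j2U by simp
    moreover have "card S div 2 = card ?S' div 2 + 1"
      using card_S' False by (simp add: le_div_geq)
    moreover have "card (used_bins xs b) \<noteq> 0"
      using j1U by auto
    ultimately show ?thesis by linarith
  qed
qed


lemma large_load_eq_bin_load:
  assumes "\<forall>x\<in>set xs. eps \<le> x"
  shows "large_load eps xs b j = bin_load xs b j"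
proof -
  have "{i. i < length xs \<and> b i = j \<and> eps \<le> xs ! i} = {i. i < length xs \<and> b i = j}"
    using assms nth_mem by blast
  then show ?thesis unfolding large_load_def bin_load_def by simp
qed

lemma has_large_item_imp_used: "has_large_item eps xs b j \<Longrightarrow> j \<in> used_bins xs b"
  unfolding has_large_item_def used_bins_def by auto

theorem mainTheorem4:
  fixes eps :: real and f :: "real \<Rightarrow> real" and xs :: "real list"
    and m :: nat and b :: "nat \<Rightarrow> nat"
  assumes "eps > 0"
    and "bp_input xs"
    and "\<forall>x\<in>set xs. eps \<le> x"
    and "is_packing xs m b"
    and "real m \<le> (1 + eps) * real (OPT xs) + f (1 / eps)"
  shows "real (card {j. j < m \<and> \<not> (\<not> has_large_item eps xs b j \<or> large_load eps xs b j > 1/2)})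
           \<le> 2 * eps * real (OPT xs) + 2 * f (1 / eps) + 3"
proof -
  let ?S = "{j. j < m \<and> \<not> (\<not> has_large_item eps xs b j \<or> large_load eps xs b j > 1/2)}"
  have "?S \<subseteq> used_bins xs b" using has_large_item_imp_used by auto
  moreover have "\<forall>j\<in>?S. bin_load xs b j \<le> 1/2"
    using large_load_eq_bin_load[OF assms(3)] by auto
  ultimately have "OPT xs + card ?S div 2 \<le> card (used_bins xs b)"
    using OPT_plus_half_empty_bins_le[OF assms(4)] by blast
  moreover have "card (used_bins xs b) \<le> m"
    using card_mono[OF _ used_bins_subset[OF assms(4)]] by simp
  moreover have "card ?S \<le> 2 * (card ?S div 2) + 1" by simp
  ultimately have "card ?S + 2 * OPT xs \<le> 2 * m + 1" by linarith
  then have "real (card ?S) + 2 * real (OPT xs) \<le> 2 * real m + 1" by linarith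
  with assms(5) show ?thesis by (simp add: algebra_simps)
qed

end
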